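(* Let $f:\mathbb{R}^n_{>0}\to\mathbb{R}^n_{>0}$ be order-preserving and homogeneous. Then $\delta(f)=\log r(f)-\log\lambda(f)$, where $\delta(f)=\inf\{d_H(x,f(x)):x\in\mathbb{R}^n_{>0}\}$.
   Context: Entrywise order. Order-preserving: $x\le y\Rightarrow f(x)\le f(y)$; homogeneous: $f(tx)=tf(x)$ for $t>0$. $d_H(x,y)=\log\max_{i,j}\frac{y_ix_j}{x_iy_j}$. $r(f)=\inf_{x\in\mathbb{R}^n_{>0}}\max_if(x)_i/x_i$ and $\lambda(f)=\sup_{x\in\mathbb{R}^n_{>0}}\min_if(x)_i/x_i$ are the upper and lower Collatz–Wielandt numbers. *)

theory Defs
  imports "HOL-Analysis.Analysis"
begin

definition pos_cone :: "(real ^ 'n) set" where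
  "pos_cone = {x. \<forall>i. x $ i > 0}"

definition order_preserving :: "(real ^ 'n \<Rightarrow> real ^ 'n) \<Rightarrow> bool" where
  "order_preserving f \<longleftrightarrow>
     (\<forall>x\<in>pos_cone. \<forall>y\<in>pos_cone. (\<forall>i. x $ i \<le> y $ i) \<longrightarrow> (\<forall>i. f x $ i \<le> f y $ i))"

definition homogeneous :: "(real ^ 'n \<Rightarrow> real ^ 'n) \<Rightarrow> bool" where
  "homogeneous f \<longleftrightarrow> (\<forall>x\<in>pos_cone. \<forall>t::real. t > 0 \<longrightarrow> f (t *\<^sub>R x) = t *\<^sub>R f x)"

definition hilbert_dist :: "real ^ 'n \<Rightarrow> real ^ 'n \<Rightarrow> real" where
  "hilbert_dist x y = ln (Max {(y $ i * x $ j) / (x $ i * y $ j) | i j. True})"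

definition cw_upper :: "(real ^ 'n \<Rightarrow> real ^ 'n) \<Rightarrow> real" where
  "cw_upper f = Inf ((\<lambda>x. Max (range (\<lambda>i. f x $ i / x $ i))) ` pos_cone)"

definition cw_lower :: "(real ^ 'n \<Rightarrow> real ^ 'n) \<Rightarrow> real" where
  "cw_lower f = Sup ((\<lambda>x. Min (range (\<lambda>i. f x $ i / x $ i))) ` pos_cone)"

definition hilbert_disp :: "(real ^ 'n \<Rightarrow> real ^ 'n) \<Rightarrow> real" where
  "hilbert_disp f = Inf ((\<lambda>x. hilbert_dist x (f x)) ` pos_cone)"

end

theory Submission
  imports Defs
begin

(* Write M(y/x) = max_i y_i/x_i and m(y/x) = min_i y_i/x_i. Then d_H(x, f x) = log M(f x/x) -
   log m(f x/x), and since r(f) <= M(f x/x) and m(f x/x) <= lambda(f) this gives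
   delta(f) >= log r(f) - log lambda(f). Conversely, take x with f x <= a x and y with f y >= b y,
   where a > r(f) and 0 < b < lambda(f). On the order interval [m(x/y) y, x] the map
   w |-> max (f w / a) (min w (f w / b)) is monotone, so it has a fixed point z by the
   Knaster-Tarski argument, and every such fixed point satisfies b z <= f z <= a z. Hence
   delta(f) <= d_H(z, f z) <= log a - log b, and a, b can be taken arbitrarily close to r(f)
   and lambda(f). *)

lemma mono_on_Icc_has_fixpoint:
  fixes g :: "'a::conditionally_complete_lattice \<Rightarrow> 'a"
  assumes "lo \<le> hi" and g_mono: "mono_on {lo..hi} g" and into: "g ` {lo..hi} \<subseteq> {lo..hi}"
  shows "\<exists>z\<in>{lo..hi}. g z = z"
proof -
  define P where "P = {u\<in>{lo..hi}. u \<le> g u}"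
  define z where "z = Sup P"
  have "lo \<in> P" using \<open>lo \<le> hi\<close> into by (auto simp: P_def image_subset_iff)
  then have "P \<noteq> {}" by blast
  have "bdd_above P" by (rule bdd_aboveI[of _ hi]) (auto simp: P_def)
  have le_z: "u \<le> z" if "u \<in> P" for u
    unfolding z_def using that \<open>bdd_above P\<close> by (rule cSup_upper)
  have "Sup P \<le> hi" using \<open>P \<noteq> {}\<close> by (rule cSup_least) (auto simp: P_def)
  then have z_mem: "z \<in> {lo..hi}" using le_z[OF \<open>lo \<in> P\<close>] by (simp add: z_def)
  have "Sup P \<le> g z"
  proof (rule cSup_least[OF \<open>P \<noteq> {}\<close>])
    fix u assume "u \<in> P"
    then have "u \<le> g u" and "g u \<le> g z"
      using mono_onD[OF g_mono _ z_mem le_z] by (auto simp: P_def)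
    then show "u \<le> g z" by order
  qed
  then have "z \<le> g z" by (simp add: z_def)
  moreover have "g z \<in> {lo..hi}" using into z_mem by blast
  then have "g z \<in> P"
    using mono_onD[OF g_mono z_mem _ \<open>z \<le> g z\<close>] by (simp add: P_def)
  then have "g z \<le> z" by (rule le_z)
  ultimately have "g z = z" by order
  with z_mem show ?thesis by blast
qed

definition max_ratio :: "real ^ 'n \<Rightarrow> real ^ 'n \<Rightarrow> real" where
  "max_ratio x y = Max (range (\<lambda>i. y $ i / x $ i))"

definition min_ratio :: "real ^ 'n \<Rightarrow> real ^ 'n \<Rightarrow> real" where
  "min_ratio x y = Min (range (\<lambda>i. y $ i / x $ i))"

lemma max_ratio_attained:
  obtains k where "max_ratio x y = y $ k / x $ k"
proof -
  have "max_ratio x y \<in> range (\<lambda>i. y $ i / x $ i)"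
    unfolding max_ratio_def by (rule Max_in) auto
  then show thesis using that by blast
qed

lemma min_ratio_attained:
  obtains k where "min_ratio x y = y $ k / x $ k"
proof -
  have "min_ratio x y \<in> range (\<lambda>i. y $ i / x $ i)"
    unfolding min_ratio_def by (rule Min_in) auto
  then show thesis using that by blast
qed

lemma min_ratio_le_max_ratio: "min_ratio x y \<le> max_ratio x y"
  unfolding min_ratio_def max_ratio_def by (rule order_trans[OF Min_le Max_ge]) auto

lemma min_ratio_pos: "x \<in> pos_cone \<Longrightarrow> y \<in> pos_cone \<Longrightarrow> 0 < min_ratio x y"
  by (rule min_ratio_attained[of x y]) (simp add: pos_cone_def)

lemma max_ratio_le_iff: "x \<in> pos_cone \<Longrightarrow> max_ratio x y \<le> a \<longleftrightarrow> y \<le> a *\<^sub>R x"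
  unfolding max_ratio_def less_eq_vec_def by (auto simp: pos_cone_def pos_divide_le_eq)

lemma le_min_ratio_iff: "x \<in> pos_cone \<Longrightarrow> b \<le> min_ratio x y \<longleftrightarrow> b *\<^sub>R x \<le> y"
  unfolding min_ratio_def less_eq_vec_def by (auto simp: pos_cone_def pos_le_divide_eq)

lemma hilbert_dist_eq_ln_ratios:
  assumes x: "x \<in> pos_cone" and y: "y \<in> pos_cone"
  shows "hilbert_dist x y = ln (max_ratio x y) - ln (min_ratio x y)"
proof -
  define S where "S = {(y $ i * x $ j) / (x $ i * y $ j) | i j. True}"
  have quot: "(y $ i * x $ j) / (x $ i * y $ j) = (y $ i / x $ i) / (y $ j / x $ j)" for i j
    using x y by (simp add: pos_cone_def)
  have pos: "0 < min_ratio x y" using x y by (rule min_ratio_pos)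
  have "Max S = max_ratio x y / min_ratio x y"
  proof (rule Max_eqI)
    have "S = (\<lambda>(i, j). (y $ i * x $ j) / (x $ i * y $ j)) ` UNIV" by (auto simp: S_def)
    then show "finite S" by simp
  next
    fix t assume "t \<in> S"
    then obtain i j where t: "t = (y $ i / x $ i) / (y $ j / x $ j)"
      unfolding S_def quot by blast
    have "y $ i / x $ i \<le> max_ratio x y" "min_ratio x y \<le> y $ j / x $ j"
      unfolding max_ratio_def min_ratio_def by auto
    then show "t \<le> max_ratio x y / min_ratio x y"
      unfolding t using pos min_ratio_le_max_ratio[of x y] by (intro frac_le) auto
  next
    obtain i j where "max_ratio x y = y $ i / x $ i" "min_ratio x y = y $ j / x $ j"
      by (metis max_ratio_attained min_ratio_attained)
    then show "max_ratio x y / min_ratio x y \<in> S"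
      unfolding S_def quot by auto
  qed
  then show ?thesis
    using pos min_ratio_le_max_ratio[of x y] by (simp add: hilbert_dist_def S_def ln_div)
qed

lemma scaleR_mem_pos_cone: "0 < c \<Longrightarrow> x \<in> pos_cone \<Longrightarrow> c *\<^sub>R x \<in> pos_cone"
  by (simp add: pos_cone_def)

lemma pos_cone_upward_closed: "x \<in> pos_cone \<Longrightarrow> x \<le> y \<Longrightarrow> y \<in> pos_cone"
  by (auto simp: pos_cone_def less_eq_vec_def intro: less_le_trans)

lemma pos_cone_nonempty: "(pos_cone :: (real ^ 'n) set) \<noteq> {}"
proof -
  have "(\<chi> i. 1) \<in> pos_cone" by (simp add: pos_cone_def)
  then show ?thesis by blast
qed

lemma hilbert_dist_nonneg:
  assumes "x \<in> pos_cone" and "y \<in> pos_cone"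
  shows "0 \<le> hilbert_dist x y"
proof -
  have "0 < min_ratio x y" using assms by (rule min_ratio_pos)
  then show ?thesis
    using min_ratio_le_max_ratio[of x y] by (simp add: hilbert_dist_eq_ln_ratios[OF assms])
qed

lemma cw_upper_eq_Inf_max_ratio: "cw_upper f = Inf ((\<lambda>x. max_ratio x (f x)) ` pos_cone)"
  unfolding cw_upper_def max_ratio_def by (rule refl)

lemma cw_lower_eq_Sup_min_ratio: "cw_lower f = Sup ((\<lambda>x. min_ratio x (f x)) ` pos_cone)"
  unfolding cw_lower_def min_ratio_def by (rule refl)

locale order_preserving_homogeneous =
  fixes f :: "real ^ 'n \<Rightarrow> real ^ 'n"
  assumes maps_pos_cone: "x \<in> pos_cone \<Longrightarrow> f x \<in> pos_cone"
    and order_preserving: "order_preserving f"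
    and homogeneous: "homogeneous f"
begin

lemma f_mono: "x \<in> pos_cone \<Longrightarrow> y \<in> pos_cone \<Longrightarrow> x \<le> y \<Longrightarrow> f x \<le> f y"
  using order_preserving by (simp add: order_preserving_def less_eq_vec_def)

lemma f_scaleR: "0 < c \<Longrightarrow> x \<in> pos_cone \<Longrightarrow> f (c *\<^sub>R x) = c *\<^sub>R f x"
  using homogeneous by (simp add: homogeneous_def)

(* Scale y so that x <= c y with equality in a coordinate k, and compare f x <= c f y at k. *)
lemma min_ratio_image_le_max_ratio_image:
  assumes x: "x \<in> pos_cone" and y: "y \<in> pos_cone"
  shows "min_ratio x (f x) \<le> max_ratio y (f y)"
proof -
  define c where "c = max_ratio y x"
  obtain k where ck: "c = x $ k / y $ k" unfolding c_def by (rule max_ratio_attained)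
  have xk: "0 < x $ k" and yk: "0 < y $ k" using x y by (auto simp: pos_cone_def)
  then have "0 < c" by (simp add: ck)
  have "x \<le> c *\<^sub>R y" using max_ratio_le_iff[OF y, of x c] by (simp add: c_def)
  then have "f x \<le> c *\<^sub>R f y"
    using f_mono[OF x scaleR_mem_pos_cone[OF \<open>0 < c\<close> y]] f_scaleR[OF \<open>0 < c\<close> y] by simp
  have "min_ratio x (f x) * x $ k \<le> f x $ k"
    using le_min_ratio_iff[OF x, of "min_ratio x (f x)" "f x"] by (simp add: less_eq_vec_def)
  also have "\<dots> \<le> c * f y $ k"
    using \<open>f x \<le> c *\<^sub>R f y\<close> by (simp add: less_eq_vec_def)
  also have "\<dots> \<le> c * (max_ratio y (f y) * y $ k)"
    using max_ratio_le_iff[OF y, of "f y" "max_ratio y (f y)"] \<open>0 < c\<close>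
    by (intro mult_left_mono) (simp_all add: less_eq_vec_def)
  also have "\<dots> = max_ratio y (f y) * x $ k"
    using yk by (simp add: ck)
  finally show ?thesis using xk by simp
qed

lemma bdd_below_max_ratio: "bdd_below ((\<lambda>x. max_ratio x (f x)) ` pos_cone)"
proof -
  obtain e :: "real ^ 'n" where "e \<in> pos_cone" using pos_cone_nonempty by blast
  then show ?thesis
    by (auto intro!: bdd_belowI[of _ "min_ratio e (f e)"] min_ratio_image_le_max_ratio_image)
qed

lemma bdd_above_min_ratio: "bdd_above ((\<lambda>x. min_ratio x (f x)) ` pos_cone)"
proof -
  obtain e :: "real ^ 'n" where "e \<in> pos_cone" using pos_cone_nonempty by blast
  then show ?thesis
    by (auto intro!: bdd_aboveI[of _ "max_ratio e (f e)"] min_ratio_image_le_max_ratio_image)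
qed

lemma cw_upper_le_max_ratio: "x \<in> pos_cone \<Longrightarrow> cw_upper f \<le> max_ratio x (f x)"
  unfolding cw_upper_eq_Inf_max_ratio by (auto intro!: cInf_lower bdd_below_max_ratio)

lemma min_ratio_le_cw_lower: "x \<in> pos_cone \<Longrightarrow> min_ratio x (f x) \<le> cw_lower f"
  unfolding cw_lower_eq_Sup_min_ratio by (auto intro!: cSup_upper bdd_above_min_ratio)

lemma cw_lower_le_cw_upper: "cw_lower f \<le> cw_upper f"
  unfolding cw_lower_eq_Sup_min_ratio cw_upper_eq_Inf_max_ratio
  using pos_cone_nonempty[where 'n = 'n] min_ratio_image_le_max_ratio_image
  by (auto intro!: cSup_least cInf_greatest)

lemma cw_lower_pos: "0 < cw_lower f"
proof -
  obtain x :: "real ^ 'n" where x: "x \<in> pos_cone" using pos_cone_nonempty by blast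
  show ?thesis
    using min_ratio_pos[OF x maps_pos_cone[OF x]] min_ratio_le_cw_lower[OF x] by linarith
qed

lemma cw_upper_pos: "0 < cw_upper f"
  using cw_lower_pos cw_lower_le_cw_upper by linarith

lemma exists_max_ratio_less: "cw_upper f < a \<Longrightarrow> \<exists>x\<in>pos_cone. max_ratio x (f x) < a"
  using cInf_lessD[of "(\<lambda>x. max_ratio x (f x)) ` pos_cone" a] pos_cone_nonempty[where 'n = 'n]
  unfolding cw_upper_eq_Inf_max_ratio by auto

lemma exists_min_ratio_greater: "b < cw_lower f \<Longrightarrow> \<exists>y\<in>pos_cone. b < min_ratio y (f y)"
  using less_cSupD[of "(\<lambda>x. min_ratio x (f x)) ` pos_cone" b] pos_cone_nonempty[where 'n = 'n]
  unfolding cw_lower_eq_Sup_min_ratio by auto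

lemma exists_between_sub_super_eigenvector:
  assumes x: "x \<in> pos_cone" "f x \<le> a *\<^sub>R x"
    and y: "y \<in> pos_cone" "b *\<^sub>R y \<le> f y"
    and "0 < b" "b \<le> a"
  shows "\<exists>z\<in>pos_cone. b *\<^sub>R z \<le> f z \<and> f z \<le> a *\<^sub>R z"
proof -
  have "0 < a" using assms by linarith
  define s where "s = min_ratio y x"
  define lo where "lo = s *\<^sub>R y"
  have "0 < s" unfolding s_def using y(1) x(1) by (rule min_ratio_pos)
  then have lo: "lo \<in> pos_cone" unfolding lo_def using y(1) by (rule scaleR_mem_pos_cone)
  have "lo \<le> x" using le_min_ratio_iff[OF y(1), of s x] by (simp add: s_def lo_def)
  have "b *\<^sub>R lo \<le> f lo"
    using scaleR_left_mono[OF y(2), of s] \<open>0 < s\<close> f_scaleR[OF \<open>0 < s\<close> y(1)]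
    by (simp add: lo_def mult.commute)
  have in_cone: "w \<in> pos_cone" if "w \<in> {lo..x}" for w
    using that lo by (auto intro: pos_cone_upward_closed)
  define g where "g w = sup (f w /\<^sub>R a) (inf w (f w /\<^sub>R b))" for w
  have "mono_on {lo..x} g"
  proof (rule mono_onI)
    fix u v assume "u \<in> {lo..x}" "v \<in> {lo..x}" "u \<le> v"
    then have "f u \<le> f v" by (intro f_mono in_cone)
    then show "g u \<le> g v"
      unfolding g_def using \<open>u \<le> v\<close> \<open>0 < a\<close> \<open>0 < b\<close>
      by (intro sup_mono inf_mono scaleR_left_mono) auto
  qed
  moreover have "g ` {lo..x} \<subseteq> {lo..x}"
  proof (rule image_subsetI)
    fix w assume w: "w \<in> {lo..x}"
    have "f lo \<le> f w" "f w \<le> f x"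
      using f_mono[OF lo in_cone[OF w]] f_mono[OF in_cone[OF w] x(1)] w by auto
    then have "lo \<le> f w /\<^sub>R b" "f w /\<^sub>R a \<le> x"
      using \<open>b *\<^sub>R lo \<le> f lo\<close> x(2) \<open>0 < a\<close> \<open>0 < b\<close>
      by (simp_all add: pos_le_divideR_eq pos_divideR_le_eq)
    then show "g w \<in> {lo..x}"
      using w unfolding g_def by (auto intro: le_supI2 le_infI1)
  qed
  ultimately obtain z where z: "z \<in> {lo..x}" "g z = z"
    using mono_on_Icc_has_fixpoint \<open>lo \<le> x\<close> by blast
  have "z \<in> pos_cone" using z(1) by (rule in_cone)
  then have "0 \<le> f z"
    using maps_pos_cone by (auto simp: pos_cone_def less_eq_vec_def intro: less_imp_le)
  then have "f z /\<^sub>R a \<le> f z /\<^sub>R b"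
    using \<open>0 < b\<close> \<open>b \<le> a\<close> by (intro scaleR_right_mono) (simp_all add: le_imp_inverse_le)
  then have "f z /\<^sub>R a \<le> z" "z \<le> f z /\<^sub>R b"
    using z(2) unfolding g_def by (metis sup_ge1, metis inf_le2 sup_least)
  then show ?thesis
    using \<open>z \<in> pos_cone\<close> \<open>0 < a\<close> \<open>0 < b\<close> by (auto simp: pos_le_divideR_eq pos_divideR_le_eq)
qed

lemma hilbert_disp_le_hilbert_dist: "x \<in> pos_cone \<Longrightarrow> hilbert_disp f \<le> hilbert_dist x (f x)"
  unfolding hilbert_disp_def
  by (auto intro!: cInf_lower bdd_belowI[of _ 0] hilbert_dist_nonneg maps_pos_cone)

lemma ln_cw_upper_minus_ln_cw_lower_le_hilbert_disp:
  "ln (cw_upper f) - ln (cw_lower f) \<le> hilbert_disp f"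
  unfolding hilbert_disp_def
proof (rule cInf_greatest)
  show "(\<lambda>x. hilbert_dist x (f x)) ` pos_cone \<noteq> {}"
    using pos_cone_nonempty[where 'n = 'n] by blast
next
  fix t assume "t \<in> (\<lambda>x. hilbert_dist x (f x)) ` pos_cone"
  then obtain x where x: "x \<in> pos_cone" and t: "t = hilbert_dist x (f x)" by blast
  have "ln (cw_upper f) \<le> ln (max_ratio x (f x))"
    using cw_upper_le_max_ratio[OF x] cw_upper_pos by simp
  moreover have "ln (min_ratio x (f x)) \<le> ln (cw_lower f)"
    using min_ratio_le_cw_lower[OF x] min_ratio_pos[OF x maps_pos_cone[OF x]] by simp
  ultimately show "ln (cw_upper f) - ln (cw_lower f) \<le> t"
    unfolding t hilbert_dist_eq_ln_ratios[OF x maps_pos_cone[OF x]] by linarith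
qed

lemma hilbert_disp_le_ln_minus_ln:
  assumes "cw_upper f < a" and "0 < b" and "b < cw_lower f"
  shows "hilbert_disp f \<le> ln a - ln b"
proof -
  obtain x where x: "x \<in> pos_cone" "max_ratio x (f x) < a"
    using exists_max_ratio_less[OF assms(1)] by blast
  obtain y where y: "y \<in> pos_cone" "b < min_ratio y (f y)"
    using exists_min_ratio_greater[OF assms(3)] by blast
  have "b \<le> a" using assms cw_lower_le_cw_upper by linarith
  moreover have "f x \<le> a *\<^sub>R x"
    using max_ratio_le_iff[OF x(1), of "f x" a] x(2) by simp
  moreover have "b *\<^sub>R y \<le> f y"
    using le_min_ratio_iff[OF y(1), of b "f y"] y(2) by simp
  ultimately obtain z where z: "z \<in> pos_cone" "b *\<^sub>R z \<le> f z" "f z \<le> a *\<^sub>R z"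
    using exists_between_sub_super_eigenvector x(1) y(1) \<open>0 < b\<close> by blast
  have "hilbert_disp f \<le> hilbert_dist z (f z)"
    using z(1) by (rule hilbert_disp_le_hilbert_dist)
  also have "\<dots> = ln (max_ratio z (f z)) - ln (min_ratio z (f z))"
    using z(1) maps_pos_cone[OF z(1)] by (rule hilbert_dist_eq_ln_ratios)
  also have "\<dots> \<le> ln a - ln b"
  proof -
    have "max_ratio z (f z) \<le> a" "b \<le> min_ratio z (f z)"
      using z by (simp_all add: max_ratio_le_iff le_min_ratio_iff)
    moreover have "0 < min_ratio z (f z)" using z(1) maps_pos_cone[OF z(1)] by (rule min_ratio_pos)
    ultimately show ?thesis
      using \<open>0 < b\<close> min_ratio_le_max_ratio[of z "f z"] by (simp add: diff_mono)
  qed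
  finally show ?thesis .
qed

end

theorem lemma2p6:
  fixes f :: "real ^ 'n \<Rightarrow> real ^ 'n"
  assumes "\<forall>x\<in>pos_cone. f x \<in> pos_cone"
    and "order_preserving f"
    and "homogeneous f"
  shows "hilbert_disp f = ln (cw_upper f) - ln (cw_lower f)"
proof -
  interpret order_preserving_homogeneous f
    using assms by unfold_locales auto
  have "hilbert_disp f \<le> ln (cw_upper f) - ln (cw_lower f)"
  proof (rule field_le_epsilon)
    fix \<epsilon> :: real assume "0 < \<epsilon>"
    define t where "t = exp (\<epsilon> / 2)"
    have "1 < t" using \<open>0 < \<epsilon>\<close> by (simp add: t_def)
    have "hilbert_disp f \<le> ln (t * cw_upper f) - ln (cw_lower f / t)"
      using \<open>1 < t\<close> cw_upper_pos cw_lower_pos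
      by (intro hilbert_disp_le_ln_minus_ln) (auto simp: field_simps)
    also have "\<dots> = ln (cw_upper f) - ln (cw_lower f) + \<epsilon>"
      using cw_upper_pos cw_lower_pos by (simp add: t_def ln_mult ln_div)
    finally show "hilbert_disp f \<le> ln (cw_upper f) - ln (cw_lower f) + \<epsilon>" .
  qed
  with ln_cw_upper_minus_ln_cw_lower_le_hilbert_disp show ?thesis by linarith
qed

end
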